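(* Let $G$ be a graph, $X\subseteq T\subseteq V(G)$, $k'$ an integer with $\sigma(T)\le k'$, and $H=H_T$ the torso of $T$ in $G$. Let $(L^*,R^* )$ be an $(X,T,k')$-witness. Then for every vertex $u\in(L^*\setminus R^* )\cap T$ there are at most $k'^2$ vertices $t\in(R^*\setminus L^* )\cap T$ such that $\{u,t\}\in E(H)$.
   Context: A vertex cut of $G$ is an ordered pair $(L,R)$ with $L\cup R=V(G)$, $L\setminus R,R\setminus L\ne\emptyset$ and no edge between $L\setminus R$ and $R\setminus L$. The adhesion $\sigma(T)$ is the maximum over connected components $C$ of $G\setminus T$ of $|N_G(C)|$. The torso $H_T$ of $T$ in $G$ is the graph with vertex set $T$ and an edge $\{u,v\}$ whenever $\{u,v\}\in E(G)$ or $u,v\in N_G(D)$ for some connected component $D$ of $G\setminus T$. An $(X,T,k')$-witness is a vertex cut $(L,R)$ of $G$ with $|L\cap R|\le k'$, $|L\cap T|>|L\cap R|$, and $X\subseteq R$. *)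

theory Defs
  imports Main
begin

definition graph :: "'a set \<Rightarrow> 'a set set \<Rightarrow> bool" where
  "graph V E \<longleftrightarrow> finite V \<and> (\<forall>e\<in>E. e \<subseteq> V \<and> card e = 2)"

definition reach_in :: "'a set set \<Rightarrow> 'a set \<Rightarrow> 'a \<Rightarrow> 'a \<Rightarrow> bool" where
  "reach_in E S = (\<lambda>x y. x \<in> S \<and> y \<in> S \<and> {x, y} \<in> E)\<^sup>*\<^sup>*"

definition component_minus :: "'a set \<Rightarrow> 'a set set \<Rightarrow> 'a set \<Rightarrow> 'a set \<Rightarrow> bool" where
  "component_minus V E T C \<longleftrightarrow>
     (\<exists>v \<in> V - T. C = {w. w \<in> V - T \<and> reach_in E (V - T) v w})"

definition nbhd :: "'a set \<Rightarrow> 'a set set \<Rightarrow> 'a set \<Rightarrow> 'a set" where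
  "nbhd V E C = {v \<in> V - C. \<exists>c \<in> C. {c, v} \<in> E}"

definition adhesion :: "'a set \<Rightarrow> 'a set set \<Rightarrow> 'a set \<Rightarrow> nat" where
  "adhesion V E T = Max ({card (nbhd V E C) | C. component_minus V E T C} \<union> {0})"

definition torso_edges :: "'a set \<Rightarrow> 'a set set \<Rightarrow> 'a set \<Rightarrow> 'a set set" where
  "torso_edges V E T = {{u, v} | u v. u \<in> T \<and> v \<in> T \<and> u \<noteq> v \<and>
      ({u, v} \<in> E \<or> (\<exists>D. component_minus V E T D \<and> u \<in> nbhd V E D \<and> v \<in> nbhd V E D))}"

definition vertex_cut :: "'a set \<Rightarrow> 'a set set \<Rightarrow> 'a set \<Rightarrow> 'a set \<Rightarrow> bool" where
  "vertex_cut V E L R \<longleftrightarrow> L \<union> R = V \<and> L - R \<noteq> {} \<and> R - L \<noteq> {} \<and>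
     (\<forall>x \<in> L - R. \<forall>y \<in> R - L. {x, y} \<notin> E)"

definition witness :: "'a set \<Rightarrow> 'a set set \<Rightarrow> 'a set \<Rightarrow> 'a set \<Rightarrow> int \<Rightarrow> 'a set \<Rightarrow> 'a set \<Rightarrow> bool" where
  "witness V E X T k' L R \<longleftrightarrow> vertex_cut V E L R \<and> int (card (L \<inter> R)) \<le> k' \<and>
     card (L \<inter> T) > card (L \<inter> R) \<and> X \<subseteq> R"

end

theory Submission
  imports Defs
begin

text \<open>A torso edge from u to a vertex t on the other side of the cut cannot be an edge of G,
  so it comes from a component D of G - T adjacent to both u and t.  A path through D from
  a neighbour of u to a neighbour of t must cross the separator, so D is the component of some
  separator vertex outside T.  Hence all such t lie in the neighbourhoods of at most
  |L \<inter> R| \<le> k' components, and each such neighbourhood has at most adhesion \<le> k' vertices.\<close>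

lemma reach_in_sym: "reach_in E S x y \<Longrightarrow> reach_in E S y x"
  unfolding reach_in_def
proof (induction rule: rtranclp_induct)
  case (step y z)
  then have "(\<lambda>x y. x \<in> S \<and> y \<in> S \<and> {x, y} \<in> E) z y" by (simp add: insert_commute)
  then show ?case using step.IH by (rule converse_rtranclp_into_rtranclp)
qed simp

lemma reach_in_trans: "reach_in E S x y \<Longrightarrow> reach_in E S y z \<Longrightarrow> reach_in E S x z"
  unfolding reach_in_def by (rule rtranclp_trans)

lemma reach_in_mem: "reach_in E S x y \<Longrightarrow> x \<in> S \<Longrightarrow> y \<in> S"
  unfolding reach_in_def by (induction rule: rtranclp_induct) auto

lemma reach_in_meets_separator:
  assumes cut: "vertex_cut V E L R" and "S \<subseteq> V"
    and reach: "reach_in E S c d" and "c \<in> L" "d \<in> R"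
  shows "\<exists>s \<in> L \<inter> R. reach_in E S c s"
proof -
  have "d \<in> R \<longrightarrow> (\<exists>s \<in> L \<inter> R. reach_in E S c s)"
    using reach unfolding reach_in_def
  proof (induction rule: rtranclp_induct)
    case base
    then show ?case using \<open>c \<in> L\<close> by auto
  next
    case (step y z)
    show ?case
    proof
      assume "z \<in> R"
      show "\<exists>s \<in> L \<inter> R. (\<lambda>x y. x \<in> S \<and> y \<in> S \<and> {x, y} \<in> E)\<^sup>*\<^sup>* c s"
      proof (cases "y \<in> R")
        case True
        then show ?thesis using step.IH by blast
      next
        case False
        then have "y \<in> L - R" using step.hyps(2) \<open>S \<subseteq> V\<close> cut unfolding vertex_cut_def by auto
        then have "z \<in> L" using \<open>z \<in> R\<close> step.hyps(2) cut unfolding vertex_cut_def by blast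
        moreover have "(\<lambda>x y. x \<in> S \<and> y \<in> S \<and> {x, y} \<in> E)\<^sup>*\<^sup>* c z"
          using step.hyps by (rule rtranclp.rtrancl_into_rtrancl)
        ultimately show ?thesis using \<open>z \<in> R\<close> by blast
      qed
    qed
  qed
  then show ?thesis using \<open>d \<in> R\<close> by blast
qed

definition component_of :: "'a set \<Rightarrow> 'a set set \<Rightarrow> 'a set \<Rightarrow> 'a \<Rightarrow> 'a set" where
  "component_of V E T v = {w. w \<in> V - T \<and> reach_in E (V - T) v w}"

lemma component_minus_iff: "component_minus V E T C \<longleftrightarrow> (\<exists>v \<in> V - T. C = component_of V E T v)"
  unfolding component_minus_def component_of_def ..

lemma component_of_cong:
  assumes "reach_in E (V - T) v s"
  shows "component_of V E T v = component_of V E T s"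
  unfolding component_of_def
  using reach_in_trans[OF assms] reach_in_trans[OF reach_in_sym[OF assms]] by blast

lemma component_minus_eq_component_of:
  assumes "component_minus V E T D" and "s \<in> D"
  shows "D = component_of V E T s"
proof -
  obtain v where D: "D = component_of V E T v"
    using assms(1) unfolding component_minus_iff by blast
  then have "reach_in E (V - T) v s"
    using assms(2) by (simp add: component_of_def)
  then show ?thesis
    unfolding D by (rule component_of_cong)
qed

lemma component_adjacent_across_cut_meets_separator:
  assumes cut: "vertex_cut V E L R" and D: "component_minus V E T D"
    and u: "u \<in> L - R" "u \<in> nbhd V E D" and t: "t \<in> R - L" "t \<in> nbhd V E D"
  shows "\<exists>s \<in> (L \<inter> R) - T. D = component_of V E T s"
proof -
  from u(2) obtain c where c: "c \<in> D" "{c, u} \<in> E" unfolding nbhd_def by auto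
  from t(2) obtain d where d: "d \<in> D" "{d, t} \<in> E" unfolding nbhd_def by auto
  have D_c: "D = component_of V E T c"
    using component_minus_eq_component_of[OF D c(1)] .
  have "c \<in> V - T" "d \<in> V - T" "reach_in E (V - T) c d"
    using c(1) d(1) unfolding D_c component_of_def by simp_all
  have "c \<in> L"
  proof (rule ccontr)
    assume "c \<notin> L"
    then have "c \<in> R - L" using cut \<open>c \<in> V - T\<close> unfolding vertex_cut_def by blast
    then show False using cut u(1) c(2) unfolding vertex_cut_def by (metis insert_commute)
  qed
  have "d \<in> R"
  proof (rule ccontr)
    assume "d \<notin> R"
    then have "d \<in> L - R" using cut \<open>d \<in> V - T\<close> unfolding vertex_cut_def by blast
    then show False using cut t(1) d(2) unfolding vertex_cut_def by blast
  qed
  obtain s where s: "s \<in> L \<inter> R" "reach_in E (V - T) c s"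
    using reach_in_meets_separator[OF cut _ \<open>reach_in E (V - T) c d\<close> \<open>c \<in> L\<close> \<open>d \<in> R\<close>]
    by blast
  have "s \<in> V - T" using reach_in_mem[OF s(2) \<open>c \<in> V - T\<close>] .
  moreover have "D = component_of V E T s"
    using D_c component_of_cong[OF s(2)] by simp
  ultimately show ?thesis using s(1) by blast
qed

lemma torso_neighbours_across_cut:
  assumes cut: "vertex_cut V E L R" and u: "u \<in> L - R"
  shows "{t \<in> R - L. {u, t} \<in> torso_edges V E T}
           \<subseteq> (\<Union>s \<in> (L \<inter> R) - T. nbhd V E (component_of V E T s))"
proof
  fix t assume "t \<in> {t \<in> R - L. {u, t} \<in> torso_edges V E T}"
  then have t: "t \<in> R - L" and torso: "{u, t} \<in> torso_edges V E T" by auto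
  have "{u, t} \<notin> E" using cut u t unfolding vertex_cut_def by blast
  from torso obtain a b where ab: "{u, t} = {a, b}"
    "{a, b} \<in> E \<or> (\<exists>D. component_minus V E T D \<and> a \<in> nbhd V E D \<and> b \<in> nbhd V E D)"
    unfolding torso_edges_def by blast
  with \<open>{u, t} \<notin> E\<close> obtain D where D: "component_minus V E T D" "u \<in> nbhd V E D" "t \<in> nbhd V E D"
    by (metis doubleton_eq_iff)
  then obtain s where "s \<in> (L \<inter> R) - T" "D = component_of V E T s"
    using component_adjacent_across_cut_meets_separator[OF cut D(1) u _ t] by blast
  then show "t \<in> (\<Union>s \<in> (L \<inter> R) - T. nbhd V E (component_of V E T s))"
    using D(3) by blast
qed

lemma card_nbhd_le_adhesion:
  assumes "finite V" and "component_minus V E T C"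
  shows "card (nbhd V E C) \<le> adhesion V E T"
proof -
  have "{card (nbhd V E C) | C. component_minus V E T C}
          \<subseteq> (\<lambda>v. card (nbhd V E (component_of V E T v))) ` (V - T)"
    unfolding component_minus_iff by blast
  then have "finite ({card (nbhd V E C) | C. component_minus V E T C} \<union> {0})"
    using \<open>finite V\<close> by (simp add: finite_subset)
  then show ?thesis
    unfolding adhesion_def using assms(2) by (intro Max_ge) auto
qed

lemma card_torso_neighbours_across_cut:
  assumes "finite V" and cut: "vertex_cut V E L R" and "u \<in> L - R"
  shows "card {t \<in> R - L. {u, t} \<in> torso_edges V E T} \<le> card (L \<inter> R) * adhesion V E T"
proof -
  let ?S = "(L \<inter> R) - T"
  have "L \<union> R = V" using cut unfolding vertex_cut_def by simp
  then have fin_S: "finite ?S" and fin_LR: "finite (L \<inter> R)"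
    using \<open>finite V\<close> by (auto intro: finite_subset)
  have fin_nbhd: "finite (nbhd V E C)" for C
    using \<open>finite V\<close> unfolding nbhd_def by simp
  have "card {t \<in> R - L. {u, t} \<in> torso_edges V E T}
          \<le> card (\<Union>s \<in> ?S. nbhd V E (component_of V E T s))"
    using torso_neighbours_across_cut[OF cut \<open>u \<in> L - R\<close>] fin_S fin_nbhd
    by (intro card_mono) auto
  also have "\<dots> \<le> (\<Sum>s \<in> ?S. card (nbhd V E (component_of V E T s)))"
    using fin_S by (rule card_UN_le)
  also have "\<dots> \<le> (\<Sum>s \<in> ?S. adhesion V E T)"
    using \<open>L \<union> R = V\<close> \<open>finite V\<close>
    by (intro sum_mono card_nbhd_le_adhesion) (auto simp: component_minus_iff)
  also have "\<dots> = card ?S * adhesion V E T" by simp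
  also have "\<dots> \<le> card (L \<inter> R) * adhesion V E T"
    by (rule mult_right_mono[OF card_mono[OF fin_LR Diff_subset]]) simp
  finally show ?thesis .
qed

theorem lemma5p14:
  fixes V :: "'a set" and E :: "'a set set" and X T L R :: "'a set" and k' :: int
  assumes "graph V E"
    and "X \<subseteq> T" and "T \<subseteq> V"
    and "int (adhesion V E T) \<le> k'"
    and "witness V E X T k' L R"
  shows "\<forall>u \<in> (L - R) \<inter> T.
           int (card {t \<in> (R - L) \<inter> T. {u, t} \<in> torso_edges V E T}) \<le> k' ^ 2"
proof
  fix u assume u: "u \<in> (L - R) \<inter> T"
  let ?N = "{t \<in> (R - L) \<inter> T. {u, t} \<in> torso_edges V E T}"
  let ?N' = "{t \<in> R - L. {u, t} \<in> torso_edges V E T}"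
  have "finite V" using assms(1) unfolding graph_def by simp
  have cut: "vertex_cut V E L R" and sep: "int (card (L \<inter> R)) \<le> k'"
    using assms(5) unfolding witness_def by auto
  have "finite ?N'"
    using \<open>finite V\<close> cut unfolding vertex_cut_def by (auto intro: finite_subset)
  then have "card ?N \<le> card ?N'"
    by (rule card_mono) blast
  also have "\<dots> \<le> card (L \<inter> R) * adhesion V E T"
    using u by (intro card_torso_neighbours_across_cut[OF \<open>finite V\<close> cut]) simp
  finally have "int (card ?N) \<le> int (card (L \<inter> R)) * int (adhesion V E T)"
    by (metis of_nat_mono of_nat_mult)
  also have "\<dots> \<le> k' * k'"
    using sep assms(4) by (intro mult_mono) auto
  finally show "int (card ?N) \<le> k' ^ 2"
    by (simp add: power2_eq_square)
qed

end
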